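(* Let $\mathcal L$ be the CNOT circuit on the grid $\{0,\dots,L-1\}^3$ acting on computational basis states by $x_{(c,r,p)}\mapsto\bigoplus_{c'\le c}x_{(c',r,p)}$ (parallel CNOT ladders $\mathrm{CNOT}_{(c',r,p)\to(c'+1,r,p)}$ applied for $c'=0,1,\dots,L-2$ in increasing order). For any two distinct pairs $(r_1,p_1)\ne(r_2,p_2)$, $$\mathcal L^\dagger\,\mathrm{CZ}_{(L-1,r_1,p_1),(L-1,r_2,p_2)}\,\mathcal L=\prod_{c=0}^{L-1}\prod_{c'=0}^{L-1}\mathrm{CZ}_{(c,r_1,p_1),(c',r_2,p_2)}.$$ Consequently, if $m$ is a canonical ordering such that the line $\ell_1=\{(c,r_1,p_1)\}_c$ occupies the ranks $\{k,\dots,k+L-1\}$ and the line $\ell_2=\{(c,r_2,p_2)\}_c$ occupies the ranks $\{k+L,\dots,k+2L-1\}$ for some $k$, then $\mathcal L^\dagger\mathrm{CZ}_{(L-1,r_1,p_1),(L-1,r_2,p_2)}\mathcal L$ maps the JW encoding with ordering $m$ to the JW encoding with ordering $m'$, where $m'(v)=m(v)+L$ for $v\in\ell_1$, $m'(v)=m(v)-L$ for $v\in\ell_2$, and $m'(v)=m(v)$ otherwise.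
   Context: Qubits are indexed by $(c,r,p)\in\{0,\dots,L-1\}^3$, $N=L^3$, with computational-basis bits $x_{(c,r,p)}$; mode $j$ is identified with qubit $j$. A canonical ordering is a bijection $m$ from sites to $\{0,\dots,N-1\}$; the JW encoding with ordering $m$ has Majoranas $\chi^{(m)}_{2j}=X_j\prod_{k:m(k)<m(j)}Z_k$, $\chi^{(m)}_{2j+1}=Y_j\prod_{k:m(k)<m(j)}Z_k$; a unitary $W$ maps the encoding with ordering $m$ to that with $m'$ if $W\chi^{(m)}_aW^\dagger=\chi^{(m')}_a$ for all $a$. $\mathrm{CZ}$ is the controlled-$Z$ gate. *)

theory Defs
  imports Complex_Main
begin

type_synonym site = "nat \<times> nat \<times> nat"
type_synonym bstate = "site \<Rightarrow> bool"
(* an operator on (C^2)^{\<otimes> N} given by its matrix entries <x|A|y> in the computational basis *)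
type_synonym qop = "bstate \<Rightarrow> bstate \<Rightarrow> complex"

definition grid :: "nat \<Rightarrow> site set" where
  "grid L = {0..<L} \<times> {0..<L} \<times> {0..<L}"

definition states :: "nat \<Rightarrow> bstate set" where
  "states L = {x. \<forall>v. x v \<longrightarrow> v \<in> grid L}"

definition op_mult :: "nat \<Rightarrow> qop \<Rightarrow> qop \<Rightarrow> qop" where
  "op_mult L A B = (\<lambda>x y. \<Sum>z\<in>states L. A x z * B z y)"

definition op_id :: "nat \<Rightarrow> qop" where
  "op_id L = (\<lambda>x y. if x \<in> states L \<and> x = y then 1 else 0)"

definition op_adj :: "qop \<Rightarrow> qop" where
  "op_adj A = (\<lambda>x y. cnj (A y x))"

definition op_prod_list :: "nat \<Rightarrow> qop list \<Rightarrow> qop" where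
  "op_prod_list L ops = foldr (op_mult L) ops (op_id L)"

definition diag_op :: "nat \<Rightarrow> (bstate \<Rightarrow> complex) \<Rightarrow> qop" where
  "diag_op L f = (\<lambda>x y. if x \<in> states L \<and> x = y then f x else 0)"

definition flip :: "bstate \<Rightarrow> site \<Rightarrow> bstate" where
  "flip x j = x(j := \<not> x j)"

definition Xop :: "nat \<Rightarrow> site \<Rightarrow> qop" where
  "Xop L j = (\<lambda>x y. if x \<in> states L \<and> y \<in> states L \<and> x = flip y j then 1 else 0)"

(* Y = [[0,-i],[i,0]] *)
definition Yop :: "nat \<Rightarrow> site \<Rightarrow> qop" where
  "Yop L j = (\<lambda>x y. if x \<in> states L \<and> y \<in> states L \<and> x = flip y j
                     then (if y j then - \<i> else \<i>) else 0)"

definition Zop :: "nat \<Rightarrow> site \<Rightarrow> qop" where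
  "Zop L j = diag_op L (\<lambda>x. if x j then -1 else 1)"

definition CZop :: "nat \<Rightarrow> site \<Rightarrow> site \<Rightarrow> qop" where
  "CZop L a b = diag_op L (\<lambda>x. if x a \<and> x b then -1 else 1)"

definition ladder_map :: "nat \<Rightarrow> bstate \<Rightarrow> bstate" where
  "ladder_map L y = (\<lambda>(c,r,p). (c,r,p) \<in> grid L \<and> odd (card {c'. c' \<le> c \<and> y (c',r,p)}))"

definition ladder_op :: "nat \<Rightarrow> qop" where
  "ladder_op L = (\<lambda>x y. if x \<in> states L \<and> y \<in> states L \<and> x = ladder_map L y then 1 else 0)"

definition sites_list :: "nat \<Rightarrow> site list" where
  "sites_list L = [(c,r,p). c \<leftarrow> [0..<L], r \<leftarrow> [0..<L], p \<leftarrow> [0..<L]]"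

definition canonical_ordering :: "nat \<Rightarrow> (site \<Rightarrow> nat) \<Rightarrow> bool" where
  "canonical_ordering L m \<longleftrightarrow> bij_betw m (grid L) {0..<L^3}"

(* Majorana chi_{2j} (b = False) and chi_{2j+1} (b = True) of the JW encoding with ordering m *)
definition jw_maj :: "nat \<Rightarrow> (site \<Rightarrow> nat) \<Rightarrow> site \<Rightarrow> bool \<Rightarrow> qop" where
  "jw_maj L m j b = op_mult L (if b then Yop L j else Xop L j)
      (op_prod_list L (map (Zop L) (filter (\<lambda>k. m k < m j) (sites_list L))))"

definition jw_maps :: "nat \<Rightarrow> qop \<Rightarrow> (site \<Rightarrow> nat) \<Rightarrow> (site \<Rightarrow> nat) \<Rightarrow> bool" where
  "jw_maps L W m m' \<longleftrightarrow>
     (\<forall>j\<in>grid L. \<forall>b. op_mult L (op_mult L W (jw_maj L m j b)) (op_adj W) = jw_maj L m' j b)"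

end

theory Submission
  imports Defs
begin

text \<open>The ladder acts on basis states by the injective map sending each line \<open>{(c, r, p)}\<^sub>c\<close> to
  its prefix parities, so conjugating a diagonal operator by it precomposes with that map.  The last
  prefix parity of a line is the parity of the whole line, hence the conjugated \<open>CZ\<close> is the
  diagonal sign \<open>(-1)^(|x \<inter> \<ell>\<^sub>1| |x \<inter> \<ell>\<^sub>2|)\<close>, which is also the product of the \<open>L\<^sup>2\<close> gates \<open>CZ\<close> between
  the two lines.  A diagonal sign maps each Majorana \<open>X\<^sub>j\<close>, \<open>Y\<^sub>j\<close> times its string of \<open>Z\<close>'s to
  itself times the sign change under flipping \<open>j\<close>.  Flipping a site of \<open>\<ell>\<^sub>1\<close> changes this sign by the
  parity of \<open>\<ell>\<^sub>2\<close> and vice versa, which is exactly how the Jordan-Wigner strings change when the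
  block of ranks of \<open>\<ell>\<^sub>1\<close> is moved past the adjacent block of \<open>\<ell>\<^sub>2\<close>.\<close>

definition bool_sign :: "bool \<Rightarrow> complex" where
  "bool_sign P = (if P then -1 else 1)"

lemma bool_sign_mult [simp]: "bool_sign P * bool_sign Q = bool_sign (P \<noteq> Q)"
  by (simp add: bool_sign_def)

lemma cnj_bool_sign [simp]: "cnj (bool_sign P) = bool_sign P"
  by (simp add: bool_sign_def)

definition parity :: "'a set \<Rightarrow> ('a \<Rightarrow> bool) \<Rightarrow> bool" where
  "parity S x \<longleftrightarrow> odd (card {k \<in> S. x k})"

lemma prod_bool_sign:
  "finite S \<Longrightarrow> (\<Prod>k\<in>S. bool_sign (x k)) = bool_sign (parity S x)"
proof (induction S rule: finite_induct)
  case empty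
  then show ?case by (simp add: parity_def bool_sign_def)
next
  case (insert a S)
  have "{k \<in> insert a S. x k} = (if x a then insert a {k \<in> S. x k} else {k \<in> S. x k})"
    by auto
  with insert show ?case
    by (simp add: parity_def)
qed

lemma parity_Un_disjoint:
  assumes fin: "finite S" "finite T" and disj: "S \<inter> T = {}"
  shows "parity (S \<union> T) x = (parity S x \<noteq> parity T x)"
proof -
  have "{k \<in> S \<union> T. x k} = {k \<in> S. x k} \<union> {k \<in> T. x k}" by auto
  moreover have "card ({k \<in> S. x k} \<union> {k \<in> T. x k}) = card {k \<in> S. x k} + card {k \<in> T. x k}"
    using fin disj by (intro card_Un_disjoint) auto
  ultimately show ?thesis
    by (simp add: parity_def)
qed

lemma parity_flip:
  assumes "finite S"
  shows "parity S (flip y j) = (parity S y \<noteq> (j \<in> S))"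
proof (cases "j \<in> S")
  case True
  define Y where "Y = {k \<in> S. y k}"
  have "finite Y" using assms by (simp add: Y_def)
  have "{k \<in> S. flip y j k} = (if y j then Y - {j} else insert j Y)"
    using True by (auto simp: flip_def Y_def)
  moreover have "y j \<longleftrightarrow> j \<in> Y"
    using True by (simp add: Y_def)
  ultimately show ?thesis
    using True \<open>finite Y\<close> card_gt_0_iff[of Y]
    by (cases "y j") (auto simp: parity_def Y_def[symmetric] card_Diff_singleton)
next
  case False
  then have "{k \<in> S. flip y j k} = {k \<in> S. y k}"
    by (auto simp: flip_def)
  with False show ?thesis
    by (simp add: parity_def)
qed

lemma parity_Times:
  "finite S \<Longrightarrow> finite T \<Longrightarrow>
    parity (S \<times> T) (\<lambda>(a, b). x a \<and> y b) = (parity S x \<and> parity T y)"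
proof -
  have "{k \<in> S \<times> T. (\<lambda>(a, b). x a \<and> y b) k} = {a \<in> S. x a} \<times> {b \<in> T. y b}"
    by auto
  then show ?thesis
    by (simp add: parity_def card_cartesian_product)
qed

lemma finite_grid [simp]: "finite (grid L)"
  by (simp add: grid_def)

lemma states_eq_indicators: "states L = (\<lambda>S v. v \<in> S) ` Pow (grid L)"
proof
  show "states L \<subseteq> (\<lambda>S v. v \<in> S) ` Pow (grid L)"
  proof
    fix x assume "x \<in> states L"
    then have "{v. x v} \<in> Pow (grid L)" "x = (\<lambda>v. v \<in> {v. x v})"
      by (auto simp: states_def)
    then show "x \<in> (\<lambda>S v. v \<in> S) ` Pow (grid L)" by blast
  qed
qed (auto simp: states_def)

lemma finite_states [simp]: "finite (states L)"
  by (simp add: states_eq_indicators)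

lemma op_mult_diag_left:
  "op_mult L (diag_op L f) A = (\<lambda>x y. if x \<in> states L then f x * A x y else 0)"
proof (intro ext)
  fix x y
  have "op_mult L (diag_op L f) A x y
      = (\<Sum>z\<in>states L. if z = x then (if x \<in> states L then f x * A x y else 0) else 0)"
    unfolding op_mult_def diag_op_def by (intro sum.cong) auto
  then show "op_mult L (diag_op L f) A x y = (if x \<in> states L then f x * A x y else 0)"
    by (simp add: sum.delta')
qed

lemma op_mult_diag_right:
  "op_mult L A (diag_op L f) = (\<lambda>x y. if y \<in> states L then A x y * f y else 0)"
proof (intro ext)
  fix x y
  have "op_mult L A (diag_op L f) x y
      = (\<Sum>z\<in>states L. if z = y then (if y \<in> states L then A x y * f y else 0) else 0)"
    unfolding op_mult_def diag_op_def by (intro sum.cong) auto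
  then show "op_mult L A (diag_op L f) x y = (if y \<in> states L then A x y * f y else 0)"
    by (simp add: sum.delta')
qed

lemma diag_op_mult: "op_mult L (diag_op L f) (diag_op L g) = diag_op L (\<lambda>x. f x * g x)"
  unfolding op_mult_diag_left by (auto simp: diag_op_def intro!: ext)

lemma op_prod_list_diag:
  "op_prod_list L (map (\<lambda>i. diag_op L (f i)) xs) = diag_op L (\<lambda>x. \<Prod>i\<leftarrow>xs. f i x)"
proof (induction xs)
  case Nil
  show ?case by (simp add: op_prod_list_def op_id_def diag_op_def)
next
  case (Cons a xs)
  then show ?case by (simp add: op_prod_list_def diag_op_mult)
qed

lemma op_adj_diag: "op_adj (diag_op L f) = diag_op L (\<lambda>x. cnj (f x))"
  by (auto simp: op_adj_def diag_op_def intro!: ext)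

definition perm_op :: "nat \<Rightarrow> (bstate \<Rightarrow> bstate) \<Rightarrow> qop" where
  "perm_op L g = (\<lambda>x y. if x \<in> states L \<and> y \<in> states L \<and> x = g y then 1 else 0)"

lemma op_adj_perm_op_mult:
  assumes "g ` states L \<subseteq> states L"
  shows "op_mult L (op_adj (perm_op L g)) B = (\<lambda>x y. if x \<in> states L then B (g x) y else 0)"
proof (intro ext)
  fix x y
  have "op_mult L (op_adj (perm_op L g)) B x y
      = (\<Sum>z\<in>states L. if z = g x then (if x \<in> states L then B (g x) y else 0) else 0)"
    unfolding op_mult_def op_adj_def perm_op_def by (intro sum.cong) auto
  then show "op_mult L (op_adj (perm_op L g)) B x y = (if x \<in> states L then B (g x) y else 0)"
    using assms by (auto simp: sum.delta')
qed

lemma op_mult_perm_op: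
  assumes "g ` states L \<subseteq> states L"
  shows "op_mult L B (perm_op L g) = (\<lambda>x y. if y \<in> states L then B x (g y) else 0)"
proof (intro ext)
  fix x y
  have "op_mult L B (perm_op L g) x y
      = (\<Sum>z\<in>states L. if z = g y then (if y \<in> states L then B x (g y) else 0) else 0)"
    unfolding op_mult_def perm_op_def by (intro sum.cong) auto
  then show "op_mult L B (perm_op L g) x y = (if y \<in> states L then B x (g y) else 0)"
    using assms by (auto simp: sum.delta')
qed

lemma perm_op_conj_diag:
  assumes "g ` states L \<subseteq> states L" and "inj_on g (states L)"
  shows "op_mult L (op_mult L (op_adj (perm_op L g)) (diag_op L f)) (perm_op L g)
       = diag_op L (\<lambda>x. f (g x))"
  unfolding op_adj_perm_op_mult[OF assms(1)] op_mult_perm_op[OF assms(1)]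
  using assms by (auto simp: diag_op_def inj_on_eq_iff image_subset_iff intro!: ext)

lemma CZop_eq_diag: "CZop L a b = diag_op L (\<lambda>x. bool_sign (x a \<and> x b))"
  by (simp add: CZop_def bool_sign_def)

lemma Zop_eq_diag: "Zop L a = diag_op L (\<lambda>x. bool_sign (x a))"
  by (simp add: Zop_def bool_sign_def)

lemma ladder_op_eq_perm_op: "ladder_op L = perm_op L (ladder_map L)"
  by (simp add: ladder_op_def perm_op_def)

lemma ladder_map_in_states: "ladder_map L x \<in> states L"
  by (auto simp: states_def ladder_map_def)

lemma ladder_map_zero: "(0, r, p) \<in> grid L \<Longrightarrow> ladder_map L x (0, r, p) = x (0, r, p)"
proof -
  have "{c'. c' \<le> 0 \<and> x (c', r, p)} = (if x (0, r, p) then {0} else {})"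
    by auto
  then show "(0, r, p) \<in> grid L \<Longrightarrow> ?thesis"
    by (simp add: ladder_map_def)
qed

lemma ladder_map_Suc:
  assumes "(Suc c, r, p) \<in> grid L"
  shows "ladder_map L x (Suc c, r, p) = (ladder_map L x (c, r, p) \<noteq> x (Suc c, r, p))"
proof -
  have "(c, r, p) \<in> grid L"
    using assms by (simp add: grid_def)
  moreover have "{c'. c' \<le> Suc c \<and> x (c', r, p)}
      = (if x (Suc c, r, p) then insert (Suc c) {c'. c' \<le> c \<and> x (c', r, p)}
         else {c'. c' \<le> c \<and> x (c', r, p)})"
    by (auto simp: le_Suc_eq)
  ultimately show ?thesis
    using assms by (simp add: ladder_map_def)
qed

lemma inj_on_ladder_map: "inj_on (ladder_map L) (states L)"
proof (rule inj_onI)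
  fix x y assume x: "x \<in> states L" and y: "y \<in> states L"
    and eq: "ladder_map L x = ladder_map L y"
  show "x = y"
  proof (intro ext)
    fix v :: site
    obtain c r p where v: "v = (c, r, p)" by (cases v) auto
    show "x v = y v"
    proof (cases "v \<in> grid L")
      case False
      then have "\<not> x v" "\<not> y v"
        using x y unfolding states_def by blast+
      then show ?thesis by simp
    next
      case True
      show ?thesis
      proof (cases c)
        case 0
        then show ?thesis
          using True eq ladder_map_zero[of r p L x] ladder_map_zero[of r p L y] by (simp add: v)
      next
        case (Suc d)
        then show ?thesis
          using True eq ladder_map_Suc[of d r p L x] ladder_map_Suc[of d r p L y] by (auto simp: v)
      qed
    qed
  qed
qed

lemma ladder_map_last:
  assumes "r < L" "p < L"
  shows "ladder_map L x (L - 1, r, p) = parity {(c, r, p) | c. c < L} x"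
proof -
  have "{c'. c' \<le> L - 1 \<and> x (c', r, p)} = {c. c < L \<and> x (c, r, p)}"
    using assms by auto
  moreover have "{v \<in> {(c, r, p) | c. c < L}. x v} = (\<lambda>c. (c, r, p)) ` {c. c < L \<and> x (c, r, p)}"
    by auto
  moreover have "inj_on (\<lambda>c. (c, r, p)) {c. c < L \<and> x (c, r, p)}"
    by (simp add: inj_on_def)
  ultimately show ?thesis
    using assms by (simp add: ladder_map_def grid_def parity_def card_image)
qed

lemma ladder_conj_CZ_last:
  assumes "r1 < L" "p1 < L" "r2 < L" "p2 < L"
  shows "op_mult L (op_mult L (op_adj (ladder_op L)) (CZop L (L - 1, r1, p1) (L - 1, r2, p2)))
           (ladder_op L)
       = diag_op L (\<lambda>x. bool_sign (parity {(c, r1, p1) | c. c < L} x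
                                  \<and> parity {(c, r2, p2) | c. c < L} x))"
proof -
  have "op_mult L (op_mult L (op_adj (ladder_op L)) (CZop L (L - 1, r1, p1) (L - 1, r2, p2)))
          (ladder_op L)
      = diag_op L (\<lambda>x. bool_sign (ladder_map L x (L - 1, r1, p1) \<and> ladder_map L x (L - 1, r2, p2)))"
    unfolding ladder_op_eq_perm_op CZop_eq_diag
    by (rule perm_op_conj_diag) (auto simp: ladder_map_in_states inj_on_ladder_map)
  then show ?thesis
    by (simp only: ladder_map_last assms)
qed

lemma prod_list_bool_sign:
  "distinct xs \<Longrightarrow> (\<Prod>k\<leftarrow>xs. bool_sign (x k)) = bool_sign (parity (set xs) x)"
  by (simp add: prod.distinct_set_conv_list[symmetric] prod_bool_sign)

lemma op_prod_list_CZop: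
  assumes "distinct as" "distinct bs"
  shows "op_prod_list L [CZop L a b. a \<leftarrow> as, b \<leftarrow> bs]
       = diag_op L (\<lambda>x. bool_sign (parity (set as) x \<and> parity (set bs) x))"
proof -
  have "[CZop L a b. a \<leftarrow> as, b \<leftarrow> bs]
      = map (\<lambda>i. diag_op L (\<lambda>x. bool_sign ((\<lambda>(a, b). x a \<and> x b) i))) (List.product as bs)"
    by (simp add: product_concat_map map_concat comp_def CZop_eq_diag)
  moreover have "distinct (List.product as bs)"
    using assms by (simp add: distinct_product)
  ultimately show ?thesis
    using assms by (simp add: op_prod_list_diag prod_list_bool_sign parity_Times)
qed

lemma op_prod_list_CZop_lines:
  "op_prod_list L [CZop L (c, r1, p1) (c', r2, p2). c \<leftarrow> [0..<L], c' \<leftarrow> [0..<L]]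
     = diag_op L (\<lambda>x. bool_sign (parity {(c, r1, p1) | c. c < L} x
                                \<and> parity {(c, r2, p2) | c. c < L} x))"
proof -
  define line where "line r p = map (\<lambda>c. (c, r, p)) [0..<L]" for r p :: nat
  have "[CZop L (c, r1, p1) (c', r2, p2). c \<leftarrow> [0..<L], c' \<leftarrow> [0..<L]]
      = [CZop L a b. a \<leftarrow> line r1 p1, b \<leftarrow> line r2 p2]"
    by (simp add: line_def map_concat comp_def)
  moreover have "distinct (line r p)" for r p
    by (simp add: line_def distinct_map inj_on_def)
  moreover have "set (line r p) = {(c, r, p) | c. c < L}" for r p
    by (auto simp: line_def)
  ultimately show ?thesis
    by (simp only: op_prod_list_CZop)
qed

lemma sites_list_eq_product: "sites_list L = List.product [0..<L] (List.product [0..<L] [0..<L])"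
  by (simp add: sites_list_def product_concat_map map_concat comp_def)

lemma distinct_sites_list: "distinct (sites_list L)"
  by (simp add: sites_list_eq_product distinct_product)

lemma set_sites_list: "set (sites_list L) = grid L"
  by (simp add: sites_list_eq_product grid_def atLeast0LessThan)

definition jw_string :: "nat \<Rightarrow> (site \<Rightarrow> nat) \<Rightarrow> site \<Rightarrow> site set" where
  "jw_string L m j = {k \<in> grid L. m k < m j}"

lemma jw_maj_entries:
  "jw_maj L m j b = (\<lambda>x y. if x \<in> states L \<and> y \<in> states L \<and> x = flip y j
      then (if b then (if y j then - \<i> else \<i>) else 1) * bool_sign (parity (jw_string L m j) y)
      else 0)"
proof -
  have "op_prod_list L (map (Zop L) (filter (\<lambda>k. m k < m j) (sites_list L)))
      = diag_op L (\<lambda>x. bool_sign (parity (jw_string L m j) x))"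
    using op_prod_list_diag[of L "\<lambda>k x. bool_sign (x k)" "filter (\<lambda>k. m k < m j) (sites_list L)"]
    by (simp add: Zop_eq_diag[abs_def] prod_list_bool_sign distinct_sites_list set_sites_list
        jw_string_def conj_commute)
  then show ?thesis
    unfolding jw_maj_def by (auto simp: op_mult_diag_right Xop_def Yop_def intro!: ext)
qed

lemma jw_maps_diag_sign:
  assumes "\<And>j y. j \<in> grid L \<Longrightarrow>
    parity (jw_string L m' j) y = (parity (jw_string L m j) y \<noteq> (Q (flip y j) \<noteq> Q y))"
  shows "jw_maps L (diag_op L (\<lambda>x. bool_sign (Q x))) m m'"
  unfolding jw_maps_def op_adj_diag op_mult_diag_left op_mult_diag_right jw_maj_entries
  using assms by (auto simp: mult_ac intro!: ext arg_cong[where f = bool_sign])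

lemma swap_blocks_less_iff:
  fixes m :: "'a \<Rightarrow> nat"
  assumes inj: "inj_on m G" and sub: "A \<subseteq> G" "B \<subseteq> G"
    and mA: "m ` A = {K..<K + a}" and mB: "m ` B = {K + a..<K + a + b}"
    and k: "k \<in> G" and j: "j \<in> G"
  defines "m' \<equiv> \<lambda>v. if v \<in> A then m v + b else if v \<in> B then m v - a else m v"
  shows "m' k < m' j \<longleftrightarrow>
    (if j \<in> A then m k < m j \<or> k \<in> B else if j \<in> B then m k < m j \<and> k \<notin> A else m k < m j)"
proof -
  have outside: "m v < K \<or> K + a + b \<le> m v" if "v \<in> G" "v \<notin> A" "v \<notin> B" for v
  proof (rule ccontr)
    assume "\<not> (m v < K \<or> K + a + b \<le> m v)"
    then have "m v \<in> m ` A \<union> m ` B"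
      using mA mB by auto
    then obtain u where u: "u \<in> A \<union> B" and "m v = m u"
      unfolding image_Un[symmetric] by blast
    moreover have "u \<in> G"
      using u sub by blast
    ultimately have "v = u"
      using inj \<open>v \<in> G\<close> by (simp add: inj_on_eq_iff)
    with u that show False
      by blast
  qed
  have inA: "K \<le> m v \<and> m v < K + a" if "v \<in> A" for v
    using mA that by auto
  have inB: "K + a \<le> m v \<and> m v < K + a + b" if "v \<in> B" for v
    using mB that by auto
  have disj: "v \<notin> A \<or> v \<notin> B" for v
    using inA inB by fastforce
  show ?thesis
    unfolding m'_def
    using inA[of k] inB[of k] inA[of j] inB[of j] outside[OF k] outside[OF j] disj[of k] disj[of j]
    by (cases "k \<in> A"; cases "k \<in> B"; cases "j \<in> A"; cases "j \<in> B") auto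
qed

lemma jw_maps_swap_blocks:
  fixes m :: "site \<Rightarrow> nat"
  assumes inj: "inj_on m (grid L)" and sub: "A \<subseteq> grid L" "B \<subseteq> grid L"
    and mA: "m ` A = {K..<K + a}" and mB: "m ` B = {K + a..<K + a + b}"
  shows "jw_maps L (diag_op L (\<lambda>x. bool_sign (parity A x \<and> parity B x))) m
           (\<lambda>v. if v \<in> A then m v + b else if v \<in> B then m v - a else m v)"
proof (rule jw_maps_diag_sign)
  fix j y assume j: "j \<in> grid L"
  define m' where "m' v = (if v \<in> A then m v + b else if v \<in> B then m v - a else m v)" for v
  have less_iff: "m' k < m' j \<longleftrightarrow>
      (if j \<in> A then m k < m j \<or> k \<in> B else if j \<in> B then m k < m j \<and> k \<notin> A else m k < m j)"
    if "k \<in> grid L" for k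
    unfolding m'_def using swap_blocks_less_iff[OF inj sub mA mB that j] .
  have A_before_B: "m u < m v" if "u \<in> A" "v \<in> B" for u v
  proof -
    have "m u \<in> {K..<K + a}" "m v \<in> {K + a..<K + a + b}"
      using mA mB that by blast+
    then show ?thesis by simp
  qed
  then have disj: "A \<inter> B = {}"
    by blast
  have fin: "finite A" "finite B" "finite (jw_string L m j)" "finite (jw_string L m' j)"
    using sub by (auto simp: jw_string_def intro: finite_subset)
  have flip_A: "parity A (flip y j) = (parity A y \<noteq> (j \<in> A))"
    and flip_B: "parity B (flip y j) = (parity B y \<noteq> (j \<in> B))"
    using fin by (simp_all add: parity_flip)
  consider (A) "j \<in> A" | (B) "j \<in> B" | (other) "j \<notin> A" "j \<notin> B"
    by blast
  then show "parity (jw_string L m' j) y = (parity (jw_string L m j) y \<noteq>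
      ((parity A (flip y j) \<and> parity B (flip y j)) \<noteq> (parity A y \<and> parity B y)))"
  proof cases
    case A
    have "m' k < m' j \<longleftrightarrow> m k < m j \<or> k \<in> B" if "k \<in> grid L" for k
      using less_iff[OF that] A by simp
    then have "jw_string L m' j = jw_string L m j \<union> B" "jw_string L m j \<inter> B = {}"
      using sub by (auto simp: jw_string_def dest: A_before_B[OF A])
    with A disj fin show ?thesis
      by (auto simp: parity_Un_disjoint flip_A flip_B)
  next
    case B
    then have "j \<notin> A"
      using disj by blast
    with B have "m' k < m' j \<longleftrightarrow> m k < m j \<and> k \<notin> A" if "k \<in> grid L" for k
      using less_iff[OF that] by simp
    then have "jw_string L m j = jw_string L m' j \<union> A" "jw_string L m' j \<inter> A = {}"
      using sub by (auto simp: jw_string_def dest: A_before_B[OF _ B])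
    with B \<open>j \<notin> A\<close> fin show ?thesis
      by (auto simp: parity_Un_disjoint flip_A flip_B)
  next
    case other
    then have "jw_string L m' j = jw_string L m j"
      using less_iff by (auto simp: jw_string_def)
    with other show ?thesis
      by (simp add: flip_A flip_B)
  qed
qed

theorem mainTheorem11:
  fixes L r1 p1 r2 p2 :: nat
  assumes "r1 < L" "p1 < L" "r2 < L" "p2 < L" "(r1, p1) \<noteq> (r2, p2)"
  shows "op_mult L (op_mult L (op_adj (ladder_op L)) (CZop L (L - 1, r1, p1) (L - 1, r2, p2)))
             (ladder_op L)
         = op_prod_list L [CZop L (c, r1, p1) (c', r2, p2). c \<leftarrow> [0..<L], c' \<leftarrow> [0..<L]]
       \<and> (\<forall>m k. canonical_ordering L m
            \<longrightarrow> m ` {(c, r1, p1) | c. c < L} = {k..<k + L}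
            \<longrightarrow> m ` {(c, r2, p2) | c. c < L} = {k + L..<k + 2 * L}
            \<longrightarrow> jw_maps L
                  (op_mult L (op_mult L (op_adj (ladder_op L)) (CZop L (L - 1, r1, p1) (L - 1, r2, p2)))
                     (ladder_op L))
                  m
                  (\<lambda>v. if v \<in> {(c, r1, p1) | c. c < L} then m v + L
                       else if v \<in> {(c, r2, p2) | c. c < L} then m v - L
                       else m v))"
proof -
  let ?line1 = "{(c, r1, p1) | c. c < L}" and ?line2 = "{(c, r2, p2) | c. c < L}"
  let ?W = "op_mult L (op_mult L (op_adj (ladder_op L)) (CZop L (L - 1, r1, p1) (L - 1, r2, p2)))
      (ladder_op L)"
  have conj: "?W = diag_op L (\<lambda>x. bool_sign (parity ?line1 x \<and> parity ?line2 x))"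
    using assms(1-4) by (rule ladder_conj_CZ_last)
  then have "?W = op_prod_list L [CZop L (c, r1, p1) (c', r2, p2). c \<leftarrow> [0..<L], c' \<leftarrow> [0..<L]]"
    by (simp only: op_prod_list_CZop_lines)
  moreover have "jw_maps L ?W m (\<lambda>v. if v \<in> ?line1 then m v + L else if v \<in> ?line2 then m v - L else m v)"
    if "canonical_ordering L m" "m ` ?line1 = {k..<k + L}" "m ` ?line2 = {k + L..<k + 2 * L}" for m k
  proof -
    have inj: "inj_on m (grid L)"
      using that(1) by (simp add: canonical_ordering_def bij_betw_def)
    have sub: "?line1 \<subseteq> grid L" "?line2 \<subseteq> grid L"
      using assms by (auto simp: grid_def)
    have "m ` ?line2 = {k + L..<k + L + L}"
      using that(3) by (simp add: mult_2 add.assoc)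
    then show ?thesis
      unfolding conj by (rule jw_maps_swap_blocks[OF inj sub that(2)])
  qed
  ultimately show ?thesis
    by blast
qed

end
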